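(* For every preference profile $\sigma_N$ of $n$ metrics over $m$ alternatives and every $\epsilon>0$, there exists a nonempty subset $K\subseteq N$ with $|K|\le \left\lceil\frac{1}{\epsilon^2}\log(2m)\right\rceil$ that satisfies $\epsilon$-positional proportionality.
   Context: Let $N=[n]$ be a set of metrics and $A=[m]$ a set of alternatives. Each metric $i\in N$ has a ranking $\sigma_i$ of $A$; $\sigma_i(a)$ is the position of $a$ (1 is best). For $K\subseteq N$, $r\in[m]$, $a\in A$, let $C(K,r,a)=|\{i\in K:\sigma_i(a)\le r\}|$. For $\epsilon\ge0$, a nonempty subset $K\subseteq N$ satisfies $\epsilon$-positional proportionality if for all $a\in A$ and $r\in[m]$, $$\left|\frac{C(N,r,a)}{|N|}-\frac{C(K,r,a)}{|K|}\right|\le\epsilon.$$ Logarithms are natural. *)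

theory Defs
  imports "HOL-Analysis.Analysis"
begin

text \<open>Metrics are N = {0..<n}, alternatives are A = {0..<m}.
  A profile assigns to each metric i a ranking sigma i :: alternative => position,
  a bijection from A onto the positions {1..m} (1 is best).\<close>

definition is_profile :: "nat \<Rightarrow> nat \<Rightarrow> (nat \<Rightarrow> nat \<Rightarrow> nat) \<Rightarrow> bool" where
  "is_profile n m \<sigma> \<longleftrightarrow> (\<forall>i<n. bij_betw (\<sigma> i) {..<m} {1..m})"

definition cnt :: "(nat \<Rightarrow> nat \<Rightarrow> nat) \<Rightarrow> nat set \<Rightarrow> nat \<Rightarrow> nat \<Rightarrow> nat" where
  "cnt \<sigma> K r a = card {i \<in> K. \<sigma> i a \<le> r}"

definition positional_prop ::
  "nat \<Rightarrow> nat \<Rightarrow> (nat \<Rightarrow> nat \<Rightarrow> nat) \<Rightarrow> real \<Rightarrow> nat set \<Rightarrow> bool" where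
  "positional_prop n m \<sigma> \<epsilon> K \<longleftrightarrow>
     K \<noteq> {} \<and> K \<subseteq> {..<n} \<and>
     (\<forall>a<m. \<forall>r\<in>{1..m}.
        \<bar>real (cnt \<sigma> {..<n} r a) / real n - real (cnt \<sigma> K r a) / real (card K)\<bar> \<le> \<epsilon>)"

end

theory Submission
  imports Defs "HOL-Probability.Hoeffding"
begin

(* Take a uniformly random k-subset T of the metrics, k = ceil(ln(2m) / eps^2) (if n <= k, take all
   metrics). For each of the m^2 pairs (a, r), the fraction of metrics in T ranking a among the
   top r is the mean of a sample of size k drawn without replacement from the 0/1 indicators of
   all metrics, so by Hoeffding's inequality it is more than eps away from the fraction over N
   with probability at most 2 exp(-2 k eps^2) <= 1 / (2 m^2). By the union bound a good T exists.
   Hoeffding's bound without replacement is obtained by counting: the sum of exp(l * sum_T x) over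
   all k-subsets T is the elementary symmetric polynomial e_k of the numbers exp(l * x_i), which by
   Maclaurin's inequality is at most (n choose k) times the k-th power of their mean. *)

lemma Chebyshev_sum_upper_set:
  fixes a b :: "'i \<Rightarrow> 'a::linordered_idom"
  assumes "\<And>i j. i \<in> A \<Longrightarrow> j \<in> A \<Longrightarrow> (a i - a j) * (b i - b j) \<le> 0"
  shows "of_nat (card A) * (\<Sum>i\<in>A. a i * b i) \<le> (\<Sum>i\<in>A. a i) * (\<Sum>i\<in>A. b i)"
proof -
  have "2 * (of_nat (card A) * (\<Sum>i\<in>A. a i * b i) - (\<Sum>i\<in>A. a i) * (\<Sum>i\<in>A. b i))
      = (\<Sum>i\<in>A. \<Sum>j\<in>A. (a i - a j) * (b i - b j))"
    by (simp only: one_add_one[symmetric] algebra_simps)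
      (simp add: algebra_simps sum_subtractf sum.distrib sum.swap[of "\<lambda>i j. a i * b j"]
        sum_distrib_left sum_distrib_right)
  also have "\<dots> \<le> 0"
    using assms by (intro sum_nonpos) auto
  finally show ?thesis by simp
qed

definition esym :: "('i \<Rightarrow> 'a::comm_ring_1) \<Rightarrow> 'i set \<Rightarrow> nat \<Rightarrow> 'a" where
  "esym y A k = (\<Sum>T | T \<subseteq> A \<and> card T = k. \<Prod>i\<in>T. y i)"

lemma esym_0 [simp]:
  assumes "finite A"
  shows "esym y A 0 = 1"
proof -
  have "{T. T \<subseteq> A \<and> card T = 0} = {{}}"
    using assms by (auto dest: finite_subset)
  then show ?thesis by (simp add: esym_def)
qed

lemma esym_eq_0_if_card_less:
  assumes "finite A" and "card A < k"
  shows "esym y A k = 0"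
proof -
  have "{T. T \<subseteq> A \<and> card T = k} = {}"
    using assms card_mono[OF \<open>finite A\<close>] by (auto simp: not_le[symmetric])
  then show ?thesis unfolding esym_def by (simp only: sum.empty)
qed

lemma esym_nonneg:
  fixes y :: "'i \<Rightarrow> 'a::linordered_idom"
  assumes "\<And>i. i \<in> A \<Longrightarrow> y i \<ge> 0"
  shows "esym y A k \<ge> 0"
  unfolding esym_def using assms by (intro sum_nonneg prod_nonneg) auto

lemma esym_insert_Suc:
  assumes "finite A" and "a \<notin> A"
  shows "esym y (insert a A) (Suc k) = esym y A (Suc k) + y a * esym y A k"
proof -
  let ?S = "\<lambda>k. {T. T \<subseteq> A \<and> card T = k}"
  have subsets: "{T. T \<subseteq> insert a A \<and> card T = Suc k} = ?S (Suc k) \<union> insert a ` ?S k"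
  proof -
    have "card (insert a T) = Suc k \<longleftrightarrow> card T = k" if "T \<subseteq> A" for T
    proof -
      have "finite T" "a \<notin> T" using that assms finite_subset by auto
      then show ?thesis by simp
    qed
    then have "{insert a T |T. T \<subseteq> A \<and> card (insert a T) = Suc k} = insert a ` ?S k"
      by blast
    then show ?thesis by (simp only: subset_insert_lemma)
  qed
  have inj: "inj_on (insert a) (?S k)"
  proof (rule inj_onI)
    fix U V assume "U \<in> ?S k" "V \<in> ?S k" and eq: "insert a U = insert a V"
    then have "a \<notin> U" "a \<notin> V" using assms(2) by auto
    with eq show "U = V" by (metis Diff_insert_absorb)
  qed
  have "esym y (insert a A) (Suc k) = esym y A (Suc k) + (\<Sum>T\<in>?S k. \<Prod>i\<in>insert a T. y i)"
    unfolding esym_def subsets using assms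
    by (subst sum.union_disjoint) (auto simp: sum.reindex[OF inj])
  also have "(\<Sum>T\<in>?S k. \<Prod>i\<in>insert a T. y i) = (\<Sum>T\<in>?S k. y a * (\<Prod>i\<in>T. y i))"
  proof (intro sum.cong refl)
    fix T assume "T \<in> ?S k"
    then have "finite T" "a \<notin> T" using assms finite_subset by auto
    then show "(\<Prod>i\<in>insert a T. y i) = y a * (\<Prod>i\<in>T. y i)" by simp
  qed
  finally show ?thesis by (simp add: esym_def sum_distrib_left)
qed

lemma sum_mult_esym_remove:
  assumes "finite A"
  shows "(\<Sum>i\<in>A. y i * esym y (A - {i}) k) = of_nat (Suc k) * esym y A (Suc k)"
  using assms
proof (induction A arbitrary: k rule: finite_induct)
  case empty
  then show ?case by (simp add: esym_eq_0_if_card_less)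
next
  case (insert a F)
  have remove: "insert a F - {i} = insert a (F - {i})" if "i \<in> F" for i
    using that insert.hyps by auto
  have split: "(\<Sum>i\<in>insert a F. y i * esym y (insert a F - {i}) k) =
      y a * esym y F k + (\<Sum>i\<in>F. y i * esym y (insert a (F - {i})) k)"
    using insert.hyps remove by simp
  show ?case
  proof (cases k)
    case 0
    have "(\<Sum>i\<in>F. y i) = esym y F 1"
      using insert.IH[of 0] insert.hyps by simp
    then show ?thesis using split 0 insert.hyps by (simp add: esym_insert_Suc)
  next
    case (Suc j)
    have "(\<Sum>i\<in>F. y i * esym y (insert a (F - {i})) k) =
        (\<Sum>i\<in>F. y i * esym y (F - {i}) (Suc j)) + y a * (\<Sum>i\<in>F. y i * esym y (F - {i}) j)"
      using insert.hyps Suc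
      by (simp add: esym_insert_Suc sum.distrib sum_distrib_left algebra_simps)
    also have "\<dots> = of_nat (Suc (Suc j)) * esym y F (Suc (Suc j)) + y a * (of_nat (Suc j) * esym y F (Suc j))"
      using insert.IH[of "Suc j"] insert.IH[of j] by simp
    finally show ?thesis using split Suc insert.hyps
      by (simp add: esym_insert_Suc algebra_simps)
  qed
qed

lemma sum_esym_remove:
  assumes "finite A"
  shows "(\<Sum>i\<in>A. esym y (A - {i}) k) = (of_nat (card A) - of_nat k) * esym y A k"
  using assms
proof (induction A arbitrary: k rule: finite_induct)
  case empty
  then show ?case by (cases k) (simp_all add: esym_eq_0_if_card_less)
next
  case (insert a F)
  have remove: "insert a F - {i} = insert a (F - {i})" if "i \<in> F" for i
    using that insert.hyps by auto
  have split: "(\<Sum>i\<in>insert a F. esym y (insert a F - {i}) k) =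
      esym y F k + (\<Sum>i\<in>F. esym y (insert a (F - {i})) k)"
    using insert.hyps remove by simp
  show ?case
  proof (cases k)
    case 0
    then show ?thesis using split insert.hyps by simp
  next
    case (Suc j)
    have "(\<Sum>i\<in>F. esym y (insert a (F - {i})) k) =
        (\<Sum>i\<in>F. esym y (F - {i}) (Suc j)) + y a * (\<Sum>i\<in>F. esym y (F - {i}) j)"
      using insert.hyps Suc
      by (simp add: esym_insert_Suc sum.distrib sum_distrib_left algebra_simps)
    also have "\<dots> = (of_nat (card F) - of_nat (Suc j)) * esym y F (Suc j)
        + y a * ((of_nat (card F) - of_nat j) * esym y F j)"
      using insert.IH[of "Suc j"] insert.IH[of j] by simp
    finally show ?thesis using split Suc insert.hyps
      by (simp add: esym_insert_Suc algebra_simps)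
  qed
qed

lemma esym_remove_diff:
  assumes "finite A" and "i \<in> A" and "j \<in> A" and "i \<noteq> j"
  shows "esym y (A - {i}) (Suc k) - esym y (A - {j}) (Suc k)
    = (y j - y i) * esym y (A - {i, j}) k"
proof -
  have fin: "finite (A - {i, j})" and "i \<notin> A - {i, j}" and "j \<notin> A - {i, j}"
    using assms(1) by auto
  have "A - {i} = insert j (A - {i, j})" and "A - {j} = insert i (A - {i, j})"
    using assms by auto
  then have "esym y (A - {i}) (Suc k) = esym y (A - {i, j}) (Suc k) + y j * esym y (A - {i, j}) k"
    and "esym y (A - {j}) (Suc k) = esym y (A - {i, j}) (Suc k) + y i * esym y (A - {i, j}) k"
    using esym_insert_Suc[OF fin] \<open>i \<notin> A - {i, j}\<close> \<open>j \<notin> A - {i, j}\<close> by metis+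
  then show ?thesis by (simp add: algebra_simps)
qed

(* Chebyshev's sum inequality for the oppositely ordered families y i and esym y (A - {i}) k. *)
lemma card_mult_esym_Suc_le:
  fixes y :: "'i \<Rightarrow> 'a::linordered_idom"
  assumes "finite A" and y: "\<And>i. i \<in> A \<Longrightarrow> y i \<ge> 0"
  shows "of_nat (card A) * (of_nat (Suc k) * esym y A (Suc k))
    \<le> (\<Sum>i\<in>A. y i) * ((of_nat (card A) - of_nat k) * esym y A k)"
proof -
  define g where "g i = esym y (A - {i}) k" for i
  have "(y i - y j) * (g i - g j) \<le> 0" if "i \<in> A" "j \<in> A" for i j
  proof (cases "i = j \<or> k = 0")
    case True
    then show ?thesis using assms(1) by (auto simp: g_def)
  next
    case False
    then obtain k' where k: "k = Suc k'" and "i \<noteq> j"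
      using not0_implies_Suc by blast
    have "(y i - y j) * (g i - g j) = - ((y i - y j)\<^sup>2 * esym y (A - {i, j}) k')"
      unfolding g_def k esym_remove_diff[OF assms(1) that \<open>i \<noteq> j\<close>]
      by (simp add: power2_eq_square algebra_simps)
    also have "\<dots> \<le> 0"
      using esym_nonneg[of "A - {i, j}" y k'] y by simp
    finally show ?thesis .
  qed
  then have "of_nat (card A) * (\<Sum>i\<in>A. y i * g i) \<le> (\<Sum>i\<in>A. y i) * (\<Sum>i\<in>A. g i)"
    by (rule Chebyshev_sum_upper_set)
  then show ?thesis
    unfolding g_def sum_mult_esym_remove[OF assms(1)] sum_esym_remove[OF assms(1)] .
qed

lemma esym_le_binomial_mean_power:
  fixes y :: "'i \<Rightarrow> 'a::linordered_field"
  assumes "finite A" and "A \<noteq> {}" and y: "\<And>i. i \<in> A \<Longrightarrow> y i \<ge> 0"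
  shows "esym y A k \<le> of_nat (card A choose k) * ((\<Sum>i\<in>A. y i) / of_nat (card A)) ^ k"
proof (induction k)
  case 0
  then show ?case using assms(1) by simp
next
  case (Suc k)
  define S where "S = (\<Sum>i\<in>A. y i)"
  define N where "N = card A"
  have "S \<ge> 0" unfolding S_def using y by (simp add: sum_nonneg)
  have "N > 0" unfolding N_def using assms(1,2) by (simp add: card_gt_0_iff)
  show ?case
  proof (cases "k < N")
    case False
    then have "esym y A (Suc k) = 0"
      unfolding N_def using assms(1) by (intro esym_eq_0_if_card_less) auto
    then show ?thesis using \<open>S \<ge> 0\<close> by (simp flip: S_def)
  next
    case True
    have binomial_step: "Suc k * (N choose Suc k) = (N - k) * (N choose k)"
      using binomial_absorption[of k N] binomial_absorb_comp[of N k] by simp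
    have "of_nat N * (of_nat (Suc k) * esym y A (Suc k))
        \<le> S * ((of_nat N - of_nat k) * esym y A k)"
      using card_mult_esym_Suc_le[OF assms(1) y, where k = k] by (simp add: S_def N_def)
    also have "\<dots> \<le> S * ((of_nat N - of_nat k) * (of_nat (N choose k) * (S / of_nat N) ^ k))"
      using Suc.IH \<open>S \<ge> 0\<close> True by (intro mult_left_mono) (auto simp: S_def N_def)
    also have "\<dots> = of_nat N * (of_nat (Suc k) * (of_nat (N choose Suc k) * (S / of_nat N) ^ Suc k))"
      using \<open>N > 0\<close> True
      by (simp add: of_nat_diff binomial_step[THEN arg_cong[where f = of_nat], simplified] field_simps)
    finally have "of_nat (Suc k) * esym y A (Suc k)
        \<le> of_nat (Suc k) * (of_nat (N choose Suc k) * (S / of_nat N) ^ Suc k)"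
      by (rule mult_left_le_imp_le) (use \<open>N > 0\<close> in simp)
    then show ?thesis
      unfolding S_def N_def by (rule mult_left_le_imp_le) (simp only: of_nat_0_less_iff zero_less_Suc)
  qed
qed

lemma exp_mult_le_chord:
  fixes l x :: real
  assumes "0 \<le> x" and "x \<le> 1"
  shows "exp (l * x) \<le> 1 + x * (exp l - 1)"
  using convex_onD[OF exp_convex, of x 0 l] assms by (simp add: algebra_simps)

lemma bernoulli_mgf_le:
  fixes p h :: real
  assumes "0 \<le> p" and "0 \<le> h"
  shows "1 + p * (exp h - 1) \<le> exp (h * p + h\<^sup>2 / 8)"
proof -
  have "0 < 1 + p * (exp h - 1)"
    using assms by (intro add_pos_nonneg mult_nonneg_nonneg) auto
  moreover have "ln (1 + p * (exp h - 1)) \<le> h * p + h\<^sup>2 / 8"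
    using Hoeffdings_lemma_aux[OF assms(2,1)] by simp
  ultimately show ?thesis
    by (metis exp_le_cancel_iff exp_ln)
qed

lemma sum_subsets_exp_sum_le:
  fixes x :: "'i \<Rightarrow> real" and l :: real
  assumes "finite A" and "A \<noteq> {}" and x: "\<And>i. i \<in> A \<Longrightarrow> 0 \<le> x i \<and> x i \<le> 1"
    and "0 \<le> l"
  shows "(\<Sum>T | T \<subseteq> A \<and> card T = k. exp (l * (\<Sum>i\<in>T. x i)))
    \<le> real (card A choose k) * exp (real k * (l * ((\<Sum>i\<in>A. x i) / real (card A)) + l\<^sup>2 / 8))"
proof -
  define N where "N = real (card A)"
  define p where "p = (\<Sum>i\<in>A. x i) / N"
  define y where "y i = exp (l * x i)" for i
  have "N > 0" unfolding N_def using assms(1,2) by (simp add: card_gt_0_iff)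
  have "p \<ge> 0" unfolding p_def using x \<open>N > 0\<close> by (simp add: sum_nonneg)
  have prod_y: "(\<Prod>i\<in>T. y i) = exp (l * (\<Sum>i\<in>T. x i))" if "T \<subseteq> A" for T
    using finite_subset[OF that assms(1)] by (simp add: y_def exp_sum sum_distrib_left)
  have mean_y: "(\<Sum>i\<in>A. y i) / N \<le> 1 + p * (exp l - 1)"
  proof -
    have "(\<Sum>i\<in>A. y i) \<le> (\<Sum>i\<in>A. 1 + x i * (exp l - 1))"
      unfolding y_def using x by (intro sum_mono exp_mult_le_chord) auto
    also have "\<dots> = N + (\<Sum>i\<in>A. x i) * (exp l - 1)"
      by (simp add: sum.distrib sum_distrib_right N_def)
    finally show ?thesis
      using \<open>N > 0\<close> by (simp add: p_def field_simps)
  qed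
  have "(\<Sum>T | T \<subseteq> A \<and> card T = k. exp (l * (\<Sum>i\<in>T. x i))) = esym y A k"
    unfolding esym_def using prod_y by simp
  also have "\<dots> \<le> real (card A choose k) * ((\<Sum>i\<in>A. y i) / N) ^ k"
    unfolding N_def using assms(1,2) by (intro esym_le_binomial_mean_power) (simp_all add: y_def)
  also have "\<dots> \<le> real (card A choose k) * exp (l * p + l\<^sup>2 / 8) ^ k"
    using mean_y bernoulli_mgf_le[OF \<open>p \<ge> 0\<close> \<open>0 \<le> l\<close>] \<open>N > 0\<close>
    by (intro mult_left_mono power_mono) (auto simp: y_def intro!: divide_nonneg_pos sum_nonneg)
  finally show ?thesis
    by (simp add: exp_of_nat_mult p_def N_def)
qed

definition subsets_exceeding :: "'i set \<Rightarrow> nat \<Rightarrow> ('i \<Rightarrow> real) \<Rightarrow> real \<Rightarrow> 'i set set" where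
  "subsets_exceeding A k x t = {T. T \<subseteq> A \<and> card T = k \<and>
     real k * ((\<Sum>i\<in>A. x i) / real (card A) + t) < (\<Sum>i\<in>T. x i)}"

lemma card_subsets_exceeding_le:
  fixes x :: "'i \<Rightarrow> real" and t :: real
  assumes "finite A" and "A \<noteq> {}" and x: "\<And>i. i \<in> A \<Longrightarrow> 0 \<le> x i \<and> x i \<le> 1"
    and "0 \<le> t"
  shows "real (card (subsets_exceeding A k x t)) \<le> real (card A choose k) * exp (- 2 * real k * t\<^sup>2)"
proof -
  define p where "p = (\<Sum>i\<in>A. x i) / real (card A)"
  define B where "B = subsets_exceeding A k x t"
  \<comment> \<open>\<open>l = 4 t\<close> minimises the Chernoff exponent \<open>k (l\<^sup>2 / 8 - l t)\<close>.\<close>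
  define l where "l = 4 * t"
  have "l \<ge> 0" unfolding l_def using \<open>0 \<le> t\<close> by simp
  have "real (card B) * exp (l * (real k * (p + t))) = (\<Sum>T\<in>B. exp (l * (real k * (p + t))))"
    by simp
  also have "\<dots> \<le> (\<Sum>T\<in>B. exp (l * (\<Sum>i\<in>T. x i)))"
    unfolding B_def subsets_exceeding_def p_def using \<open>l \<ge> 0\<close>
    by (intro sum_mono) (simp add: mult_left_mono)
  also have "\<dots> \<le> (\<Sum>T | T \<subseteq> A \<and> card T = k. exp (l * (\<Sum>i\<in>T. x i)))"
    unfolding B_def subsets_exceeding_def using assms(1) by (intro sum_mono2) auto
  also have "\<dots> \<le> real (card A choose k) * exp (real k * (l * p + l\<^sup>2 / 8))"
    unfolding p_def by (rule sum_subsets_exp_sum_le[OF assms(1,2) x \<open>l \<ge> 0\<close>])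
  finally have "real (card B)
      \<le> real (card A choose k) * exp (real k * (l * p + l\<^sup>2 / 8)) / exp (l * (real k * (p + t)))"
    by (simp add: pos_le_divide_eq)
  also have "\<dots> = real (card A choose k) * exp (real k * (l * p + l\<^sup>2 / 8) - l * (real k * (p + t)))"
    by (simp add: exp_diff)
  also have "real k * (l * p + l\<^sup>2 / 8) - l * (real k * (p + t)) = - 2 * real k * t\<^sup>2"
    unfolding l_def by (simp add: power2_eq_square algebra_simps)
  finally show ?thesis
    unfolding B_def .
qed

lemma mean_deviation_subsets_subset:
  fixes x :: "'i \<Rightarrow> real" and t :: real
  assumes "finite A" and "A \<noteq> {}" and "0 < k"
  shows "{T. T \<subseteq> A \<and> card T = k \<and>
            t < \<bar>(\<Sum>i\<in>A. x i) / real (card A) - (\<Sum>i\<in>T. x i) / real (card T)\<bar>}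
    \<subseteq> subsets_exceeding A k x t \<union> subsets_exceeding A k (\<lambda>i. 1 - x i) t"
proof
  fix T assume "T \<in> {T. T \<subseteq> A \<and> card T = k \<and>
    t < \<bar>(\<Sum>i\<in>A. x i) / real (card A) - (\<Sum>i\<in>T. x i) / real (card T)\<bar>}"
  then have T: "T \<subseteq> A" "card T = k"
    and dev: "t < \<bar>(\<Sum>i\<in>A. x i) / real (card A) - (\<Sum>i\<in>T. x i) / real k\<bar>"
    by auto
  have "card A > 0" using assms(1,2) by (simp add: card_gt_0_iff)
  have complement: "(\<Sum>i\<in>A. 1 - x i) / real (card A) = 1 - (\<Sum>i\<in>A. x i) / real (card A)"
    "(\<Sum>i\<in>T. 1 - x i) = real k - (\<Sum>i\<in>T. x i)"
    using \<open>card A > 0\<close> T by (simp_all add: sum_subtractf field_simps)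
  from dev consider
      "t < (\<Sum>i\<in>T. x i) / real k - (\<Sum>i\<in>A. x i) / real (card A)"
    | "t < (\<Sum>i\<in>A. x i) / real (card A) - (\<Sum>i\<in>T. x i) / real k"
    by linarith
  then show "T \<in> subsets_exceeding A k x t \<union> subsets_exceeding A k (\<lambda>i. 1 - x i) t"
  proof cases
    case 1
    then have "T \<in> subsets_exceeding A k x t"
      using T \<open>0 < k\<close> by (simp add: subsets_exceeding_def field_simps)
    then show ?thesis ..
  next
    case 2
    then have "T \<in> subsets_exceeding A k (\<lambda>i. 1 - x i) t"
      using T \<open>0 < k\<close> by (simp add: subsets_exceeding_def complement field_simps)
    then show ?thesis ..
  qed
qed

lemma card_subsets_mean_deviation_le:
  fixes x :: "'i \<Rightarrow> real" and t :: real
  assumes "finite A" and "A \<noteq> {}" and x: "\<And>i. i \<in> A \<Longrightarrow> 0 \<le> x i \<and> x i \<le> 1"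
    and "0 \<le> t" and "0 < k"
  shows "real (card {T. T \<subseteq> A \<and> card T = k \<and>
             t < \<bar>(\<Sum>i\<in>A. x i) / real (card A) - (\<Sum>i\<in>T. x i) / real (card T)\<bar>})
    \<le> 2 * (real (card A choose k) * exp (- 2 * real k * t\<^sup>2))"
proof -
  have finite: "finite (subsets_exceeding A k z t)" for z
    unfolding subsets_exceeding_def using assms(1) by simp
  have "card {T. T \<subseteq> A \<and> card T = k \<and>
      t < \<bar>(\<Sum>i\<in>A. x i) / real (card A) - (\<Sum>i\<in>T. x i) / real (card T)\<bar>}
    \<le> card (subsets_exceeding A k x t \<union> subsets_exceeding A k (\<lambda>i. 1 - x i) t)"
    using finite mean_deviation_subsets_subset[OF assms(1,2,5)] by (intro card_mono) auto
  also have "\<dots> \<le> card (subsets_exceeding A k x t) + card (subsets_exceeding A k (\<lambda>i. 1 - x i) t)"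
    by (rule card_Un_le)
  finally have "real (card {T. T \<subseteq> A \<and> card T = k \<and>
      t < \<bar>(\<Sum>i\<in>A. x i) / real (card A) - (\<Sum>i\<in>T. x i) / real (card T)\<bar>})
    \<le> real (card (subsets_exceeding A k x t)) + real (card (subsets_exceeding A k (\<lambda>i. 1 - x i) t))"
    by linarith
  also have "\<dots> \<le> 2 * (real (card A choose k) * exp (- 2 * real k * t\<^sup>2))"
    using card_subsets_exceeding_le[OF assms(1,2) _ \<open>0 \<le> t\<close>, of x k]
      card_subsets_exceeding_le[OF assms(1,2) _ \<open>0 \<le> t\<close>, of "\<lambda>i. 1 - x i" k] x
    by fastforce
  finally show ?thesis .
qed

lemma exists_card_subset_with_close_means:
  fixes x :: "'j \<Rightarrow> 'i \<Rightarrow> real" and t :: real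
  assumes "finite A" and "finite J" and "0 < k" and "k \<le> card A" and "0 \<le> t"
    and x: "\<And>j i. j \<in> J \<Longrightarrow> i \<in> A \<Longrightarrow> 0 \<le> x j i \<and> x j i \<le> 1"
    and small: "2 * real (card J) * exp (- 2 * real k * t\<^sup>2) < 1"
  shows "\<exists>T \<subseteq> A. card T = k \<and>
    (\<forall>j\<in>J. \<bar>(\<Sum>i\<in>A. x j i) / real (card A) - (\<Sum>i\<in>T. x j i) / real (card T)\<bar> \<le> t)"
proof -
  define bad where "bad j = {T. T \<subseteq> A \<and> card T = k \<and>
    t < \<bar>(\<Sum>i\<in>A. x j i) / real (card A) - (\<Sum>i\<in>T. x j i) / real (card T)\<bar>}" for j
  define C where "C = real (card A choose k)"
  have "A \<noteq> {}" using assms(3,4) by auto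
  have "C > 0" unfolding C_def using assms(4) by simp
  have "real (card (\<Union>j\<in>J. bad j)) \<le> (\<Sum>j\<in>J. real (card (bad j)))"
    using card_UN_le[OF assms(2), of bad] by (simp flip: of_nat_sum)
  also have "\<dots> \<le> (\<Sum>j\<in>J. 2 * (C * exp (- 2 * real k * t\<^sup>2)))"
    unfolding bad_def C_def using x
    by (intro sum_mono card_subsets_mean_deviation_le[OF assms(1) \<open>A \<noteq> {}\<close> _ assms(5,3)]) auto
  also have "\<dots> = C * (2 * real (card J) * exp (- 2 * real k * t\<^sup>2))"
    by simp
  also have "\<dots> < C"
    using small \<open>C > 0\<close> by simp
  also have "C = real (card {T. T \<subseteq> A \<and> card T = k})"
    unfolding C_def using n_subsets[OF assms(1)] by simp
  finally have "card (\<Union>j\<in>J. bad j) < card {T. T \<subseteq> A \<and> card T = k}"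
    by simp
  moreover have "finite (\<Union>j\<in>J. bad j)"
    unfolding bad_def using assms(1,2) by auto
  ultimately obtain T where "T \<subseteq> A" "card T = k" "T \<notin> (\<Union>j\<in>J. bad j)"
    using card_mono[of "\<Union>j\<in>J. bad j" "{T. T \<subseteq> A \<and> card T = k}"] by fastforce
  then show ?thesis
    unfolding bad_def by (auto simp: not_less)
qed

lemma exists_subset_with_close_means:
  fixes x :: "'j \<Rightarrow> 'i \<Rightarrow> real" and t :: real
  assumes "finite A" and "finite J" and "0 < k" and "0 \<le> t"
    and "\<And>j i. j \<in> J \<Longrightarrow> i \<in> A \<Longrightarrow> 0 \<le> x j i \<and> x j i \<le> 1"
    and "2 * real (card J) * exp (- 2 * real k * t\<^sup>2) < 1"
  shows "\<exists>T \<subseteq> A. card T = min k (card A) \<and>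
    (\<forall>j\<in>J. \<bar>(\<Sum>i\<in>A. x j i) / real (card A) - (\<Sum>i\<in>T. x j i) / real (card T)\<bar> \<le> t)"
proof (cases "k \<le> card A")
  case True
  then show ?thesis
    using exists_card_subset_with_close_means[OF assms(1-3) True assms(4-)] by simp
next
  case False
  then show ?thesis
    using \<open>0 \<le> t\<close> by (intro exI[of _ A]) simp
qed

definition top_indicator :: "(nat \<Rightarrow> nat \<Rightarrow> nat) \<Rightarrow> nat \<times> nat \<Rightarrow> nat \<Rightarrow> real" where
  "top_indicator \<sigma> ar i = of_bool (\<sigma> i (fst ar) \<le> snd ar)"

lemma cnt_eq_sum_top_indicator:
  assumes "finite K"
  shows "real (cnt \<sigma> K r a) = (\<Sum>i\<in>K. top_indicator \<sigma> (a, r) i)"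
proof -
  have "K \<inter> {i. \<sigma> i a \<le> r} = {i \<in> K. \<sigma> i a \<le> r}" by auto
  then show ?thesis
    using assms by (simp add: cnt_def top_indicator_def)
qed

lemma positional_prop_iff_close_means:
  "positional_prop n m \<sigma> \<epsilon> K \<longleftrightarrow> K \<noteq> {} \<and> K \<subseteq> {..<n} \<and>
     (\<forall>j\<in>{..<m} \<times> {1..m}. \<bar>(\<Sum>i\<in>{..<n}. top_indicator \<sigma> j i) / real (card {..<n})
        - (\<Sum>i\<in>K. top_indicator \<sigma> j i) / real (card K)\<bar> \<le> \<epsilon>)"
proof (cases "K \<subseteq> {..<n}")
  case True
  then have "finite K"
    using finite_subset by blast
  then show ?thesis
    unfolding positional_prop_def split_paired_Ball_Sigma unfolding Ball_def lessThan_iff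
    by (simp only: cnt_eq_sum_top_indicator finite_lessThan card_lessThan)
qed (simp add: positional_prop_def)

lemma two_mult_sq_exp_less_1:
  fixes \<epsilon> :: real
  assumes "1 \<le> m" and "ln (2 * real m) \<le> real k * \<epsilon>\<^sup>2"
  shows "2 * real (m * m) * exp (- 2 * real k * \<epsilon>\<^sup>2) < 1"
proof -
  have "exp (- 2 * real k * \<epsilon>\<^sup>2) \<le> exp (- 2 * ln (2 * real m))"
    using assms(2) by (subst exp_le_cancel_iff) linarith
  also have "\<dots> = inverse (exp (ln (2 * real m)) ^ 2)"
    by (simp only: mult_minus_left exp_minus exp_double)
  also have "\<dots> = 1 / (2 * real m)\<^sup>2"
    using assms(1) by (subst exp_ln) (auto simp: inverse_eq_divide)
  finally have "2 * real (m * m) * exp (- 2 * real k * \<epsilon>\<^sup>2)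
      \<le> 2 * real (m * m) * (1 / (2 * real m)\<^sup>2)"
    by (rule mult_left_mono) simp
  also have "\<dots> < 1"
    using assms(1) by (simp add: power2_eq_square)
  finally show ?thesis .
qed

theorem theorem3:
  fixes n m :: nat and \<sigma> :: "nat \<Rightarrow> nat \<Rightarrow> nat" and \<epsilon> :: real
  assumes "n \<ge> 1" and "m \<ge> 1"
    and "is_profile n m \<sigma>"
    and "\<epsilon> > 0"
  shows "\<exists>K. K \<subseteq> {..<n} \<and> K \<noteq> {} \<and>
           real (card K) \<le> real_of_int \<lceil>(1 / \<epsilon>^2) * ln (2 * real m)\<rceil> \<and>
           positional_prop n m \<sigma> \<epsilon> K"
proof -
  define k where "k = nat \<lceil>(1 / \<epsilon>^2) * ln (2 * real m)\<rceil>"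
  have "ln (2 * real m) > 0" using assms(2) by simp
  then have k_eq: "real k = real_of_int \<lceil>(1 / \<epsilon>^2) * ln (2 * real m)\<rceil>" and "k > 0"
    using assms(4) by (auto simp: k_def)
  have "ln (2 * real m) / \<epsilon>^2 \<le> real k"
    unfolding k_eq by simp
  then have k_large: "ln (2 * real m) \<le> real k * \<epsilon>^2"
    using assms(4) by (simp add: pos_divide_le_eq)
  have "2 * real (card ({..<m} \<times> {1..m})) * exp (- 2 * real k * \<epsilon>\<^sup>2) < 1"
    using two_mult_sq_exp_less_1[OF assms(2) k_large] by (simp add: card_cartesian_product)
  moreover have "0 \<le> top_indicator \<sigma> j i \<and> top_indicator \<sigma> j i \<le> 1" for j i
    by (simp add: top_indicator_def)
  ultimately obtain K where K: "K \<subseteq> {..<n}" "card K = min k n" and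
    "\<forall>j\<in>{..<m} \<times> {1..m}. \<bar>(\<Sum>i\<in>{..<n}. top_indicator \<sigma> j i) / real (card {..<n})
        - (\<Sum>i\<in>K. top_indicator \<sigma> j i) / real (card K)\<bar> \<le> \<epsilon>"
    using exists_subset_with_close_means[OF finite_lessThan[of n] _ \<open>k > 0\<close>,
        where J = "{..<m} \<times> {1..m}" and t = \<epsilon> and x = "top_indicator \<sigma>"] assms(4)
    by force
  moreover have "K \<noteq> {}"
    using K(2) assms(1) \<open>k > 0\<close> by auto
  moreover have "real (card K) \<le> real_of_int \<lceil>(1 / \<epsilon>^2) * ln (2 * real m)\<rceil>"
    using K(2) k_eq by simp
  ultimately show ?thesis
    unfolding positional_prop_iff_close_means by blast
qed

end
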